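(* Let $M$ be an adequate monoid, $\chi:\Sigma\to M$ a function and $\rho$ the map defined below. For every $\Sigma$-tree $X$, $\rho(X)=\rho(\overline{X})$, where $\overline{X}$ is (any representative of) the pruning of $X$.
   Context: Adequate monoid: a monoid $M$ whose idempotents commute and in which every $\mathcal{L}^*$-class and every $\mathcal{R}^*$-class contains an idempotent, where $a\,\mathcal{L}^*\,b$ iff ($ax=ay\Leftrightarrow bx=by$ for all $x,y\in M$) and $a\,\mathcal{R}^*\,b$ iff ($xa=ya\Leftrightarrow xb=yb$ for all $x,y\in M$); $x^+$ and $x^*$ denote the unique idempotents $\mathcal{R}^*$- and $\mathcal{L}^*$-related to $x$. Trees: a $\Sigma$-tree is a finite directed graph whose underlying undirected graph is a tree, each edge $e$ having initial vertex $\alpha(e)$, terminal vertex $\omega(e)$ and label $\lambda(e)\in\Sigma$, with distinguished start and end vertices such that there is a (possibly empty) directed path (the trunk) from start to end vertex; idempotent if start equals end vertex. A morphism $X\to Y$ maps vertices to vertices and edges to edges preserving $\alpha,\omega,\lambda$ and start/end vertices; isomorphisms are bijective morphisms. A retraction is an idempotent morphism $X\to X$, its image a retract; $X$ is pruned if it has no non-identity retraction. Every tree has a pruned retract, unique up to isomorphism; its isomorphism type is $\overline{X}$. $\tau$ (on idempotent trees, values idempotents of $M$) is defined recursively: $\tau(X)=1$ if $X$ has no edges; otherwise with $v$ the start (= end) vertex, for each edge $e$ with $\alpha(e)=v$ let $X_e$ be the component of $X$ minus $e$ containing $\omega(e)$, as an idempotent tree at $\omega(e)$, and for each edge $e$ with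 $\omega(e)=v$ let $X_e$ be the component of $X$ minus $e$ containing $\alpha(e)$, as an idempotent tree at $\alpha(e)$; then $\tau(X)=\prod_{e:\alpha(e)=v}[\chi(\lambda(e))\tau(X_e)]^+\cdot\prod_{e:\omega(e)=v}[\tau(X_e)\chi(\lambda(e))]^*$ (commuting idempotents, order irrelevant). For any tree $X$ with trunk vertices $v_0,\dots,v_n$ in order and $a_i$ the label of the trunk edge from $v_{i-1}$ to $v_i$, let $X_i$ be the component containing $v_i$ of $X$ with all trunk edges removed, as an idempotent tree at $v_i$; $\rho(X)=\tau(X_0)\chi(a_1)\tau(X_1)\cdots\chi(a_n)\tau(X_n)$. Both depend only on isomorphism type. *)

theory Defs
  imports Main
begin

definition idem :: "'m::monoid_mult \<Rightarrow> bool" where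
  "idem e \<longleftrightarrow> e * e = e"

definition Lstar :: "'m::monoid_mult \<Rightarrow> 'm \<Rightarrow> bool" where
  "Lstar a b \<longleftrightarrow> (\<forall>x y. a * x = a * y \<longleftrightarrow> b * x = b * y)"

definition Rstar :: "'m::monoid_mult \<Rightarrow> 'm \<Rightarrow> bool" where
  "Rstar a b \<longleftrightarrow> (\<forall>x y. x * a = y * a \<longleftrightarrow> x * b = y * b)"

definition adequate :: "'m::monoid_mult itself \<Rightarrow> bool" where
  "adequate (_ :: 'm itself) \<longleftrightarrow>
     (\<forall>e f :: 'm. idem e \<and> idem f \<longrightarrow> e * f = f * e) \<and>
     (\<forall>a :: 'm. \<exists>e. idem e \<and> Lstar a e) \<and>
     (\<forall>a :: 'm. \<exists>e. idem e \<and> Rstar a e)"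

text \<open>x^+ : the unique idempotent R*-related to x; x^* : the unique idempotent L*-related to x.\<close>
definition dplus :: "'m::monoid_mult \<Rightarrow> 'm" where
  "dplus x = (THE e. idem e \<and> Rstar x e)"

definition dstar :: "'m::monoid_mult \<Rightarrow> 'm" where
  "dstar x = (THE e. idem e \<and> Lstar x e)"

text \<open>Product of a finite family (of commuting idempotents) in some enumeration order;
  the order is irrelevant for commuting factors.\<close>
definition setprod :: "('a \<Rightarrow> 'm::monoid_mult) \<Rightarrow> 'a set \<Rightarrow> 'm" where
  "setprod f S = foldr (\<lambda>a acc. f a * acc) (SOME xs. distinct xs \<and> set xs = S) 1"

record ('v, 'e, 's) dtree =
  verts :: "'v set"
  edges :: "'e set"
  src   :: "'e \<Rightarrow> 'v"
  tgt   :: "'e \<Rightarrow> 'v"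
  lab   :: "'e \<Rightarrow> 's"
  st    :: 'v
  en    :: 'v

definition uadj :: "('v, 'e, 's) dtree \<Rightarrow> 'e set \<Rightarrow> ('v \<times> 'v) set" where
  "uadj X F = {(u, w). \<exists>e \<in> F. (src X e = u \<and> tgt X e = w) \<or> (src X e = w \<and> tgt X e = u)}"

fun dpath :: "('v, 'e, 's) dtree \<Rightarrow> 'v \<Rightarrow> 'e list \<Rightarrow> 'v \<Rightarrow> bool" where
  "dpath X u [] w \<longleftrightarrow> u = w"
| "dpath X u (e # es) w \<longleftrightarrow> e \<in> edges X \<and> src X e = u \<and> dpath X (tgt X e) es w"

definition is_trunk :: "('v, 'e, 's) dtree \<Rightarrow> 'e list \<Rightarrow> bool" where
  "is_trunk X es \<longleftrightarrow> distinct es \<and> dpath X (st X) es (en X)"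

text \<open>A Sigma-tree: finite directed graph whose underlying undirected graph is a tree
  (connected, and every edge is a bridge, i.e. acyclic), with a directed trunk path
  from the start to the end vertex.\<close>
definition is_tree :: "('v, 'e, 's) dtree \<Rightarrow> bool" where
  "is_tree X \<longleftrightarrow>
     finite (verts X) \<and> finite (edges X) \<and>
     (\<forall>e \<in> edges X. src X e \<in> verts X \<and> tgt X e \<in> verts X) \<and>
     st X \<in> verts X \<and> en X \<in> verts X \<and>
     (\<forall>u \<in> verts X. \<forall>w \<in> verts X. (u, w) \<in> (uadj X (edges X))\<^sup>*) \<and>
     (\<forall>e \<in> edges X. (src X e, tgt X e) \<notin> (uadj X (edges X - {e}))\<^sup>*) \<and>
     (\<exists>es. is_trunk X es)"

definition morphism :: "('v, 'e, 's) dtree \<Rightarrow> ('w, 'f, 's) dtree \<Rightarrow> ('v \<Rightarrow> 'w) \<Rightarrow> ('e \<Rightarrow> 'f) \<Rightarrow> bool" where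
  "morphism X Y fV fE \<longleftrightarrow>
     (\<forall>v \<in> verts X. fV v \<in> verts Y) \<and>
     (\<forall>e \<in> edges X. fE e \<in> edges Y \<and> src Y (fE e) = fV (src X e) \<and>
                     tgt Y (fE e) = fV (tgt X e) \<and> lab Y (fE e) = lab X e) \<and>
     fV (st X) = st Y \<and> fV (en X) = en Y"

definition isomorphism :: "('v, 'e, 's) dtree \<Rightarrow> ('w, 'f, 's) dtree \<Rightarrow> ('v \<Rightarrow> 'w) \<Rightarrow> ('e \<Rightarrow> 'f) \<Rightarrow> bool" where
  "isomorphism X Y fV fE \<longleftrightarrow> morphism X Y fV fE \<and>
     bij_betw fV (verts X) (verts Y) \<and> bij_betw fE (edges X) (edges Y)"

definition retraction :: "('v, 'e, 's) dtree \<Rightarrow> ('v \<Rightarrow> 'v) \<Rightarrow> ('e \<Rightarrow> 'e) \<Rightarrow> bool" where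
  "retraction X fV fE \<longleftrightarrow> morphism X X fV fE \<and>
     (\<forall>v \<in> verts X. fV (fV v) = fV v) \<and> (\<forall>e \<in> edges X. fE (fE e) = fE e)"

definition retract_img :: "('v, 'e, 's) dtree \<Rightarrow> ('v \<Rightarrow> 'v) \<Rightarrow> ('e \<Rightarrow> 'e) \<Rightarrow> ('v, 'e, 's) dtree" where
  "retract_img X fV fE = X\<lparr>verts := fV ` verts X, edges := fE ` edges X\<rparr>"

definition pruned :: "('v, 'e, 's) dtree \<Rightarrow> bool" where
  "pruned X \<longleftrightarrow> (\<forall>fV fE. retraction X fV fE \<longrightarrow>
      (\<forall>v \<in> verts X. fV v = v) \<and> (\<forall>e \<in> edges X. fE e = e))"

text \<open>tau_aux n chi X v F computes tau of the idempotent tree at v formed by the component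
  of v in X with the edges F removed (F contains the edge(s) leading back towards the parent);
  in recursive calls the subtree X_e at the far end of edge e is the component of X - e.
  The fuel n is the number of edges, which bounds the depth, so it never runs out.\<close>
primrec tau_aux :: "nat \<Rightarrow> ('s \<Rightarrow> 'm::monoid_mult) \<Rightarrow> ('v, 'e, 's) dtree \<Rightarrow> 'v \<Rightarrow> 'e set \<Rightarrow> 'm" where
  "tau_aux 0 chi X v F = 1"
| "tau_aux (Suc n) chi X v F =
     setprod (\<lambda>e. dplus (chi (lab X e) * tau_aux n chi X (tgt X e) {e}))
             {e \<in> edges X. src X e = v \<and> e \<notin> F} *
     setprod (\<lambda>e. dstar (tau_aux n chi X (src X e) {e} * chi (lab X e)))
             {e \<in> edges X. tgt X e = v \<and> e \<notin> F}"

text \<open>tau of an idempotent tree (start = end vertex).\<close>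
definition tau :: "('s \<Rightarrow> 'm::monoid_mult) \<Rightarrow> ('v, 'e, 's) dtree \<Rightarrow> 'm" where
  "tau chi X = tau_aux (card (edges X)) chi X (st X) {}"

definition trunk :: "('v, 'e, 's) dtree \<Rightarrow> 'e list" where
  "trunk X = (SOME es. is_trunk X es)"

text \<open>rho(X) = tau(X_0) chi(a_1) tau(X_1) ... chi(a_n) tau(X_n), where X_i is the component
  of v_i in X with all trunk edges removed.\<close>
definition rho :: "('s \<Rightarrow> 'm::monoid_mult) \<Rightarrow> ('v, 'e, 's) dtree \<Rightarrow> 'm" where
  "rho chi X =
     (let es = trunk X;
          T = (\<lambda>v. tau_aux (card (edges X)) chi X v (set es))
      in T (st X) * foldr (\<lambda>e acc. chi (lab X e) * T (tgt X e) * acc) es 1)"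

end

theory Submission
  imports Defs
begin

text \<open>For a vertex \<open>v\<close> of a tree \<open>X\<close> write \<open>\<tau>\<^sub>v(X)\<close> for \<open>\<tau>\<close> of \<open>X\<close> regarded as an idempotent
  tree at \<open>v\<close>.  In the natural order of the commuting idempotents, along every edge \<open>e\<close> the value
  \<open>\<tau>\<^bsub>\<alpha>(e)\<^esub>\<close> lies below \<open>[\<chi>(\<lambda>e) \<tau>\<^bsub>\<omega>(e)\<^esub>]\<^sup>+\<close> and \<open>\<tau>\<^bsub>\<omega>(e)\<^esub>\<close> below
  \<open>[\<tau>\<^bsub>\<alpha>(e)\<^esub> \<chi>(\<lambda>e)]\<^sup>*\<close>.  By induction along the recursion defining \<open>\<tau>\<close>, whenever the edges
  of \<open>X\<close> map label-preservingly into a tree \<open>Z\<close>, \<open>\<tau>\<^bsub>g x\<^esub>(Z)\<close> lies below \<open>\<tau>\<close> of every subtree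
  of \<open>X\<close> at \<open>x\<close>.  A tree and its image under an endomorphism map into each other, so their rooted
  values agree at every fixed vertex.  Directed paths in a tree are unique, so the trunk is fixed,
  and \<open>\<rho>(X)\<close> equals \<open>\<tau>\<^bsub>v\<^sub>0\<^esub>(X) \<chi>(a\<^sub>1) \<tau>\<^bsub>v\<^sub>1\<^esub>(X) \<cdots> \<chi>(a\<^sub>n) \<tau>\<^bsub>v\<^sub>n\<^esub>(X)\<close>, computed from rooted
  values at trunk vertices only; hence \<open>\<rho>\<close> does not change when passing to a retract.\<close>

section \<open>Adequate monoids\<close>

lemma idem_commute:
  "adequate TYPE('m::monoid_mult) \<Longrightarrow> idem (e::'m) \<Longrightarrow> idem f \<Longrightarrow> e * f = f * e"
  unfolding adequate_def by blast

lemma idem_mult: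
  assumes "adequate TYPE('m::monoid_mult)" "idem (e::'m)" "idem f"
  shows "idem (e * f)"
proof -
  have "(e * f) * (e * f) = (e * e) * (f * f)"
    using idem_commute[OF assms] by (metis mult.assoc)
  then show ?thesis using assms(2,3) by (simp add: idem_def)
qed

lemma Rstar_sym: "Rstar a b \<Longrightarrow> Rstar b a" unfolding Rstar_def by blast
lemma Rstar_trans: "Rstar a b \<Longrightarrow> Rstar b c \<Longrightarrow> Rstar a c" unfolding Rstar_def by blast
lemma Lstar_sym: "Lstar a b \<Longrightarrow> Lstar b a" unfolding Lstar_def by blast
lemma Lstar_trans: "Lstar a b \<Longrightarrow> Lstar b c \<Longrightarrow> Lstar a c" unfolding Lstar_def by blast

lemma Rstar_idem_eq:
  assumes A: "adequate TYPE('m::monoid_mult)" and "idem (e::'m)" "idem f" "Rstar e f"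
  shows "e = f"
proof -
  have "e * e = 1 * e" "f * f = 1 * f" using assms(2,3) by (simp_all add: idem_def)
  then have "e * f = 1 * f" "f * e = 1 * e" using assms(4) unfolding Rstar_def by blast+
  then show ?thesis using idem_commute[OF A assms(2,3)] by simp
qed

lemma Lstar_idem_eq:
  assumes A: "adequate TYPE('m::monoid_mult)" and "idem (e::'m)" "idem f" "Lstar e f"
  shows "e = f"
proof -
  have "e * e = e * 1" "f * f = f * 1" using assms(2,3) by (simp_all add: idem_def)
  then have "e * f = e * 1" "f * e = f * 1" using assms(4) unfolding Lstar_def by blast+
  then show ?thesis using idem_commute[OF A assms(2,3)] by simp
qed

lemma dplus_spec:
  assumes A: "adequate TYPE('m::monoid_mult)"
  shows "idem (dplus (x::'m)) \<and> Rstar x (dplus x)"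
proof -
  obtain e :: 'm where "idem e" "Rstar x e" using A unfolding adequate_def by blast
  then have "\<exists>!e. idem e \<and> Rstar x e"
    using Rstar_idem_eq[OF A] Rstar_trans Rstar_sym by metis
  then show ?thesis unfolding dplus_def by (rule theI')
qed

lemma dstar_spec:
  assumes A: "adequate TYPE('m::monoid_mult)"
  shows "idem (dstar (x::'m)) \<and> Lstar x (dstar x)"
proof -
  obtain e :: 'm where "idem e" "Lstar x e" using A unfolding adequate_def by blast
  then have "\<exists>!e. idem e \<and> Lstar x e"
    using Lstar_idem_eq[OF A] Lstar_trans Lstar_sym by metis
  then show ?thesis unfolding dstar_def by (rule theI')
qed

lemmas dplus_idem = dplus_spec[THEN conjunct1]
  and Rstar_dplus = dplus_spec[THEN conjunct2]
  and dstar_idem = dstar_spec[THEN conjunct1]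
  and Lstar_dstar = dstar_spec[THEN conjunct2]

lemma dplus_eqI:
  "adequate TYPE('m::monoid_mult) \<Longrightarrow> idem (e::'m) \<Longrightarrow> Rstar x e \<Longrightarrow> dplus x = e"
  using Rstar_idem_eq dplus_spec Rstar_trans Rstar_sym by metis

lemma dstar_eqI:
  "adequate TYPE('m::monoid_mult) \<Longrightarrow> idem (e::'m) \<Longrightarrow> Lstar x e \<Longrightarrow> dstar x = e"
  using Lstar_idem_eq dstar_spec Lstar_trans Lstar_sym by metis

lemma dplus_mult_self:
  assumes A: "adequate TYPE('m::monoid_mult)"
  shows "dplus (x::'m) * x = x"
  using dplus_spec[OF A, of x] unfolding Rstar_def idem_def by (metis mult_1)

lemma mult_dstar_self:
  assumes A: "adequate TYPE('m::monoid_mult)"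
  shows "(x::'m) * dstar x = x"
  using dstar_spec[OF A, of x] unfolding Lstar_def idem_def by (metis mult_1_right)

lemma dplus_idem_mult:
  assumes A: "adequate TYPE('m::monoid_mult)" and e: "idem (e::'m)"
  shows "dplus (e * x) = e * dplus x"
proof (rule dplus_eqI[OF A])
  show "idem (e * dplus x)" using idem_mult[OF A e dplus_idem[OF A]] .
  show "Rstar (e * x) (e * dplus x)"
    using Rstar_dplus[OF A, of x] unfolding Rstar_def by (simp add: mult.assoc[symmetric])
qed

lemma dstar_mult_idem:
  assumes A: "adequate TYPE('m::monoid_mult)" and e: "idem (e::'m)"
  shows "dstar (x * e) = dstar x * e"
proof (rule dstar_eqI[OF A])
  show "idem (dstar x * e)" using idem_mult[OF A dstar_idem[OF A] e] .
  show "Lstar (x * e) (dstar x * e)"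
    using Lstar_dstar[OF A, of x] unfolding Lstar_def by (simp add: mult.assoc)
qed

lemma dplus_prefix:
  assumes A: "adequate TYPE('m::monoid_mult)"
  shows "dplus (y::'m) * dplus (y * z) = dplus (y * z)"
  using dplus_idem_mult[OF A dplus_idem[OF A], of y "y * z"]
  by (simp add: mult.assoc[symmetric] dplus_mult_self[OF A])

lemma dstar_suffix:
  assumes A: "adequate TYPE('m::monoid_mult)"
  shows "dstar (z * y) * dstar (y::'m) = dstar (z * y)"
  using dstar_mult_idem[OF A dstar_idem[OF A], of "z * y" y]
  by (simp add: mult.assoc mult_dstar_self[OF A])

text \<open>For idempotents, \<open>p * t = p\<close> expresses the natural order \<open>p \<le> t\<close>.\<close>

lemma dplus_mult_mono:
  assumes A: "adequate TYPE('m::monoid_mult)" and "idem (p::'m)" "idem t" "p * t = p"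
  shows "dplus (c * p) * dplus (c * t) = dplus (c * p)"
proof -
  have "c * p = (c * t) * p"
    using idem_commute[OF A assms(3,2)] assms(4) by (simp add: mult.assoc)
  then have "dplus (c * t) * dplus (c * p) = dplus (c * p)"
    using dplus_prefix[OF A, of "c * t" p] by simp
  then show ?thesis using idem_commute[OF A dplus_idem[OF A] dplus_idem[OF A], of "c * t" "c * p"] by simp
qed

lemma dstar_mult_mono:
  assumes A: "adequate TYPE('m::monoid_mult)" and "(p::'m) * t = p"
  shows "dstar (p * c) * dstar (t * c) = dstar (p * c)"
  using dstar_suffix[OF A, of p "t * c"] assms(2) by (simp add: mult.assoc[symmetric])

section \<open>Products of commuting idempotents\<close>

lemma setprod_eq_prod_list:
  "setprod f S = prod_list (map f (SOME xs. distinct xs \<and> set xs = S))"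
  by (simp add: setprod_def prod_list.eq_foldr foldr_map comp_def)

lemma setprod_enumeration:
  assumes "finite S"
  obtains xs where "distinct xs" "set xs = S" "setprod f S = prod_list (map f xs)"
proof -
  have "\<exists>xs. distinct xs \<and> set xs = S" using finite_distinct_list[OF assms] by blast
  then have "distinct (SOME xs. distinct xs \<and> set xs = S) \<and> set (SOME xs. distinct xs \<and> set xs = S) = S"
    by (rule someI_ex)
  then show ?thesis using that setprod_eq_prod_list by blast
qed

lemma setprod_empty [simp]: "setprod f {} = 1"
proof -
  have nil: "(SOME xs. distinct xs \<and> set xs = {}) = []" by (rule some_equality) auto
  show ?thesis unfolding setprod_eq_prod_list nil by simp
qed

lemma prod_list_commute:
  assumes "\<forall>b\<in>set xs. f a * f b = f b * f a"
  shows "f a * prod_list (map f xs) = prod_list (map f xs) * (f a :: 'm::monoid_mult)"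
  using assms
proof (induction xs)
  case (Cons b xs)
  then have ab: "f a * f b = f b * f a"
    and IH: "f a * prod_list (map f xs) = prod_list (map f xs) * f a"
    by simp_all
  have "f a * (f b * prod_list (map f xs)) = f b * (f a * prod_list (map f xs))"
    by (simp add: mult.assoc[symmetric] ab)
  also have "\<dots> = (f b * prod_list (map f xs)) * f a"
    by (simp add: IH mult.assoc)
  finally show ?case by simp
qed simp

lemma prod_list_perm_commuting:
  assumes "distinct xs" "distinct ys" "set xs = set ys"
    and "\<forall>a\<in>set xs. \<forall>b\<in>set xs. f a * f b = f b * f a"
  shows "prod_list (map f xs) = prod_list (map (f :: _ \<Rightarrow> 'm::monoid_mult) ys)"
  using assms
proof (induction xs arbitrary: ys)
  case (Cons a xs)
  obtain ys1 ys2 where ys: "ys = ys1 @ a # ys2"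
    using Cons.prems(3) by (metis list.set_intros(1) split_list)
  have "set xs = set (ys1 @ ys2)" "distinct (ys1 @ ys2)"
    using Cons.prems(1-3) unfolding ys by auto
  then have IH: "prod_list (map f xs) = prod_list (map f (ys1 @ ys2))"
    using Cons.prems(1,4) by (intro Cons.IH) simp_all
  have "\<forall>b\<in>set ys1. f a * f b = f b * f a"
  proof
    fix b assume "b \<in> set ys1"
    then have "b \<in> set (a # xs)" using Cons.prems(3) unfolding ys by simp
    moreover have "a \<in> set (a # xs)" by simp
    ultimately show "f a * f b = f b * f a" using Cons.prems(4) by blast
  qed
  then have comm: "f a * prod_list (map f ys1) = prod_list (map f ys1) * f a"
    by (rule prod_list_commute)
  have "prod_list (map f (a # xs)) = (f a * prod_list (map f ys1)) * prod_list (map f ys2)"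
    by (simp add: IH mult.assoc)
  also have "\<dots> = prod_list (map f ys)"
    by (simp add: comm ys mult.assoc)
  finally show ?case .
qed simp

context
  fixes f :: "'a \<Rightarrow> 'm::monoid_mult"
  assumes A: "adequate TYPE('m)"
begin

lemma setprod_eq_prod_list_enum:
  assumes "finite S" "\<forall>a\<in>S. idem (f a)" "distinct xs" "set xs = S"
  shows "setprod f S = prod_list (map f xs)"
proof -
  obtain ys where ys: "distinct ys" "set ys = S" "setprod f S = prod_list (map f ys)"
    using setprod_enumeration[OF assms(1)] .
  have "\<forall>a\<in>set ys. \<forall>b\<in>set ys. f a * f b = f b * f a"
    using assms(2) ys(2) idem_commute[OF A] by blast
  then show ?thesis
    using prod_list_perm_commuting[OF ys(1) assms(3)] ys(2,3) assms(4) by simp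
qed

lemma setprod_insert:
  assumes "finite S" "\<forall>b\<in>insert a S. idem (f b)" "a \<notin> S"
  shows "setprod f (insert a S) = f a * setprod f S"
proof -
  obtain ys where ys: "distinct ys" "set ys = S" "setprod f S = prod_list (map f ys)"
    using setprod_enumeration[OF assms(1)] .
  have "setprod f (insert a S) = prod_list (map f (a # ys))"
    using assms ys by (intro setprod_eq_prod_list_enum) auto
  then show ?thesis using ys by simp
qed

lemma setprod_idem:
  assumes "finite S" "\<forall>a\<in>S. idem (f a)"
  shows "idem (setprod f S)"
proof -
  obtain ys where ys: "set ys = S" "setprod f S = prod_list (map f ys)"
    using setprod_enumeration[OF assms(1)] by metis
  have "\<forall>a\<in>set ys. idem (f a)" using ys(1) assms(2) by blast
  then have "idem (prod_list (map f ys))"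
  proof (induction ys)
    case Nil
    then show ?case by (simp add: idem_def)
  next
    case (Cons a ys)
    then show ?case using idem_mult[OF A] by simp
  qed
  then show ?thesis using ys by simp
qed

end

lemma setprod_reindex:
  assumes A: "adequate TYPE('m::monoid_mult)"
    and "finite S" "inj_on g S" "\<forall>a\<in>g ` S. idem ((h :: _ \<Rightarrow> 'm) a)"
  shows "setprod h (g ` S) = setprod (h \<circ> g) S"
proof -
  obtain ys where ys: "distinct ys" "set ys = S" "setprod (h \<circ> g) S = prod_list (map (h \<circ> g) ys)"
    using setprod_enumeration[OF assms(2)] .
  have "setprod h (g ` S) = prod_list (map h (map g ys))"
    using assms ys by (intro setprod_eq_prod_list_enum[OF A]) (auto simp: distinct_map)
  then show ?thesis using ys by simp
qed

lemma setprod_cong: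
  assumes "finite S" "\<And>a. a \<in> S \<Longrightarrow> f a = g a"
  shows "setprod f S = setprod g S"
proof -
  have "\<exists>xs. distinct xs \<and> set xs = S" using finite_distinct_list[OF assms(1)] by blast
  then have "set (SOME xs. distinct xs \<and> set xs = S) = S" by (rule someI_ex[THEN conjunct2])
  then show ?thesis unfolding setprod_eq_prod_list using assms(2)
    by (intro arg_cong[where f = prod_list] map_cong) auto
qed

lemma setprod_absorb:
  assumes "finite S" "\<And>a. a \<in> S \<Longrightarrow> e * f a = e"
  shows "e * setprod f S = (e :: 'm::monoid_mult)"
proof -
  obtain ys where ys: "set ys = S" "setprod f S = prod_list (map f ys)"
    using setprod_enumeration[OF assms(1)] by metis
  have "\<forall>a\<in>set ys. e * f a = e" using assms(2) ys(1) by blast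
  then have "e * prod_list (map f ys) = e"
    by (induction ys) (simp_all add: mult.assoc[symmetric])
  then show ?thesis using ys by simp
qed

lemma tau_aux_idem:
  assumes A: "adequate TYPE('m::monoid_mult)" and fin: "finite (edges X)"
  shows "idem (tau_aux n (chi::'s \<Rightarrow> 'm) X v F)"
proof (cases n)
  case 0
  then show ?thesis by (simp add: idem_def)
next
  case (Suc k)
  show ?thesis unfolding Suc tau_aux.simps
    by (intro idem_mult[OF A] setprod_idem[OF A])
       (simp_all add: fin dplus_idem[OF A] dstar_idem[OF A])
qed

lemma tau_aux_removed_cong:
  assumes "\<And>e. e \<in> edges X \<Longrightarrow> src X e = v \<or> tgt X e = v \<Longrightarrow> e \<in> F \<longleftrightarrow> e \<in> G"
  shows "tau_aux n chi X v F = tau_aux n chi X v G"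
proof (cases n)
  case (Suc k)
  have "{e \<in> edges X. src X e = v \<and> e \<notin> F} = {e \<in> edges X. src X e = v \<and> e \<notin> G}"
       "{e \<in> edges X. tgt X e = v \<and> e \<notin> F} = {e \<in> edges X. tgt X e = v \<and> e \<notin> G}"
    using assms by blast+
  then show ?thesis unfolding Suc tau_aux.simps by simp
qed simp

lemma tau_aux_split_out:
  assumes A: "adequate TYPE('m::monoid_mult)" and fin: "finite (edges X)"
    and e: "e \<in> edges X" "src X e = v" "tgt X e \<noteq> v" "e \<notin> F"
  shows "tau_aux (Suc n) (chi::'s \<Rightarrow> 'm) X v F =
           tau_aux (Suc n) chi X v (insert e F) * dplus (chi (lab X e) * tau_aux n chi X (tgt X e) {e})"
proof -
  define f where "f = (\<lambda>e. dplus (chi (lab X e) * tau_aux n chi X (tgt X e) {e}))"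
  define S where "S = {e' \<in> edges X. src X e' = v \<and> e' \<notin> insert e F}"
  define Q where "Q = setprod (\<lambda>e. dstar (tau_aux n chi X (src X e) {e} * chi (lab X e)))
                        {e' \<in> edges X. tgt X e' = v \<and> e' \<notin> insert e F}"
  have "{e' \<in> edges X. src X e' = v \<and> e' \<notin> F} = insert e S"
       "{e' \<in> edges X. tgt X e' = v \<and> e' \<notin> F} = {e' \<in> edges X. tgt X e' = v \<and> e' \<notin> insert e F}"
    using e unfolding S_def by auto
  then have "tau_aux (Suc n) chi X v F = setprod f (insert e S) * Q"
    unfolding tau_aux.simps f_def Q_def by simp
  also have "setprod f (insert e S) = f e * setprod f S"
    using fin by (intro setprod_insert[OF A]) (auto simp: S_def f_def dplus_idem[OF A])
  also have "(f e * setprod f S) * Q = (setprod f S * Q) * f e"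
  proof -
    have "idem (f e)" "idem (setprod f S)" "idem Q"
      using fin by (auto simp: f_def S_def Q_def dplus_idem[OF A] dstar_idem[OF A]
                         intro!: setprod_idem[OF A])
    then show ?thesis using idem_commute[OF A] by (metis mult.assoc)
  qed
  also have "setprod f S * Q = tau_aux (Suc n) chi X v (insert e F)"
    unfolding tau_aux.simps f_def S_def Q_def ..
  finally show ?thesis unfolding f_def by simp
qed

lemma tau_aux_split_in:
  assumes A: "adequate TYPE('m::monoid_mult)" and fin: "finite (edges X)"
    and e: "e \<in> edges X" "tgt X e = v" "src X e \<noteq> v" "e \<notin> F"
  shows "tau_aux (Suc n) (chi::'s \<Rightarrow> 'm) X v F =
           tau_aux (Suc n) chi X v (insert e F) * dstar (tau_aux n chi X (src X e) {e} * chi (lab X e))"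
proof -
  define g where "g = (\<lambda>e. dstar (tau_aux n chi X (src X e) {e} * chi (lab X e)))"
  define S where "S = {e' \<in> edges X. tgt X e' = v \<and> e' \<notin> insert e F}"
  define P where "P = setprod (\<lambda>e. dplus (chi (lab X e) * tau_aux n chi X (tgt X e) {e}))
                        {e' \<in> edges X. src X e' = v \<and> e' \<notin> insert e F}"
  have "{e' \<in> edges X. tgt X e' = v \<and> e' \<notin> F} = insert e S"
       "{e' \<in> edges X. src X e' = v \<and> e' \<notin> F} = {e' \<in> edges X. src X e' = v \<and> e' \<notin> insert e F}"
    using e unfolding S_def by auto
  then have "tau_aux (Suc n) chi X v F = P * setprod g (insert e S)"
    unfolding tau_aux.simps g_def P_def by simp
  also have "setprod g (insert e S) = g e * setprod g S"
    using fin by (intro setprod_insert[OF A]) (auto simp: S_def g_def dstar_idem[OF A])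
  also have "P * (g e * setprod g S) = (P * setprod g S) * g e"
  proof -
    have "idem (g e)" "idem (setprod g S)" "idem P"
      using fin by (auto simp: g_def S_def P_def dplus_idem[OF A] dstar_idem[OF A]
                         intro!: setprod_idem[OF A])
    then show ?thesis using idem_commute[OF A] by (metis mult.assoc)
  qed
  also have "P * setprod g S = tau_aux (Suc n) chi X v (insert e F)"
    unfolding tau_aux.simps g_def S_def P_def ..
  finally show ?thesis unfolding g_def by simp
qed

section \<open>Forests and directed paths\<close>

definition forest :: "('v, 'e, 's) dtree \<Rightarrow> bool" where
  "forest X \<longleftrightarrow> finite (edges X) \<and>
     (\<forall>e \<in> edges X. (src X e, tgt X e) \<notin> (uadj X (edges X - {e}))\<^sup>*)"

lemma tree_forest: "is_tree X \<Longrightarrow> forest X"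
  unfolding is_tree_def forest_def by blast

lemma forest_finite: "forest X \<Longrightarrow> finite (edges X)"
  unfolding forest_def by blast

lemma uadj_mono: "F \<subseteq> G \<Longrightarrow> (a, b) \<in> (uadj X F)\<^sup>* \<Longrightarrow> (a, b) \<in> (uadj X G)\<^sup>*"
  by (rule rtrancl_mono[THEN subsetD, rotated]) (auto simp: uadj_def)

lemma sym_uadj: "sym (uadj X F)"
  unfolding uadj_def sym_def by blast

lemma uadj_rtrancl_sym: "(a, b) \<in> (uadj X F)\<^sup>* \<Longrightarrow> (b, a) \<in> (uadj X F)\<^sup>*"
  using sym_rtrancl[OF sym_uadj] by (rule symD)

lemma src_tgt_uadj: "e \<in> F \<Longrightarrow> (src X e, tgt X e) \<in> uadj X F"
  and tgt_src_uadj: "e \<in> F \<Longrightarrow> (tgt X e, src X e) \<in> uadj X F"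
  unfolding uadj_def by blast+

lemma forest_bridge:
  assumes "forest X" "e \<in> edges X"
  shows "(src X e, tgt X e) \<notin> (uadj X (edges X - {e}))\<^sup>*"
    and "(tgt X e, src X e) \<notin> (uadj X (edges X - {e}))\<^sup>*"
proof -
  show "(src X e, tgt X e) \<notin> (uadj X (edges X - {e}))\<^sup>*"
    using assms unfolding forest_def by blast
  then show "(tgt X e, src X e) \<notin> (uadj X (edges X - {e}))\<^sup>*"
    using uadj_rtrancl_sym[of "tgt X e" "src X e" X] by blast
qed

lemma forest_no_loop: "forest X \<Longrightarrow> e \<in> edges X \<Longrightarrow> src X e \<noteq> tgt X e"
  using forest_bridge(1)[of X e] by auto

lemma dpath_append: "dpath X u (xs @ ys) w \<longleftrightarrow> (\<exists>m. dpath X u xs m \<and> dpath X m ys w)"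
  by (induction xs arbitrary: u) auto

lemma dpath_edges: "dpath X u es w \<Longrightarrow> set es \<subseteq> edges X"
  by (induction es arbitrary: u) auto

lemma dpath_uadj: "dpath X u es w \<Longrightarrow> (u, w) \<in> (uadj X (set es))\<^sup>*"
proof (induction es arbitrary: u)
  case (Cons e es)
  then have "(tgt X e, w) \<in> (uadj X (set es))\<^sup>*" by simp
  then have "(tgt X e, w) \<in> (uadj X (set (e # es)))\<^sup>*"
    by (rule uadj_mono[rotated]) auto
  moreover have "(u, tgt X e) \<in> uadj X (set (e # es))"
    using Cons.prems src_tgt_uadj[of e "set (e # es)" X] by simp
  ultimately show ?case by (meson converse_rtrancl_into_rtrancl)
qed simp

lemma forest_no_cycle:
  assumes "forest X" "g \<in> edges X" "dpath X (tgt X g) es (src X g)"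
  shows "g \<in> set es"
proof (rule ccontr)
  assume "g \<notin> set es"
  then have "set es \<subseteq> edges X - {g}" using dpath_edges[OF assms(3)] by blast
  then have "(tgt X g, src X g) \<in> (uadj X (edges X - {g}))\<^sup>*"
    using dpath_uadj[OF assms(3)] by (rule uadj_mono)
  with forest_bridge(2)[OF assms(1,2)] show False by contradiction
qed

lemma dpath_distinct: "forest X \<Longrightarrow> dpath X a es b \<Longrightarrow> distinct es"
proof (induction es arbitrary: a)
  case (Cons e es)
  have "e \<notin> set es"
  proof
    assume "e \<in> set es"
    then obtain p q where pq: "es = p @ e # q" "e \<notin> set p" by (meson split_list_first)
    then have "dpath X (tgt X e) p (src X e)" "e \<in> edges X"
      using Cons.prems(2) by (auto simp: dpath_append)
    then show False using forest_no_cycle[OF Cons.prems(1)] pq(2) by blast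
  qed
  moreover have "distinct es"
    using Cons.prems by (intro Cons.IH[of "tgt X e"]) simp_all
  ultimately show ?case by simp
qed simp

lemma forest_closed_dpath:
  assumes f: "forest X" and p: "dpath X a es a"
  shows "es = []"
proof (rule ccontr)
  assume "es \<noteq> []"
  then obtain g r where es: "es = g # r" by (cases es) auto
  then have "g \<notin> set r" using dpath_distinct[OF f p] by simp
  moreover have "g \<in> set r" using p es forest_no_cycle[OF f, of g r] by simp
  ultimately show False by contradiction
qed

text \<open>Two different first edges \<open>e \<noteq> g\<close> out of the same vertex would close a cycle through
  the common endpoint of the two paths, contradicting that \<open>e\<close> is a bridge.\<close>

lemma dpath_unique: "forest X \<Longrightarrow> dpath X a s b \<Longrightarrow> dpath X a t b \<Longrightarrow> s = t"
proof (induction s arbitrary: a t)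
  case Nil
  then have "dpath X a t a" by simp
  then have "t = []" by (rule forest_closed_dpath[OF Nil.prems(1)])
  then show ?case by simp
next
  case (Cons e s)
  show ?case
  proof (cases t)
    case Nil
    then have "dpath X a (e # s) a" using Cons.prems(2,3) by simp
    then have "e # s = []" by (rule forest_closed_dpath[OF Cons.prems(1)])
    then show ?thesis by simp
  next
    case t: (Cons g t')
    have pe: "e \<in> edges X" "src X e = a" "dpath X (tgt X e) s b" using Cons.prems by auto
    have pg: "g \<in> edges X" "src X g = a" "dpath X (tgt X g) t' b" using Cons.prems t by auto
    show ?thesis
    proof (cases "e = g")
      case True
      then have "dpath X (tgt X e) t' b" using pg(3) by simp
      then have "s = t'" by (rule Cons.IH[OF Cons.prems(1) pe(3)])
      then show ?thesis using t True by simp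
    next
      case False
      have "e \<notin> set t'"
      proof
        assume "e \<in> set t'"
        then obtain p q where pq: "t' = p @ e # q" by (meson split_list)
        then have "dpath X (tgt X g) p (src X g)" using pg pe by (auto simp: dpath_append)
        moreover have "g \<notin> set p" using dpath_distinct[OF Cons.prems(1,3)] t pq by simp
        ultimately show False using forest_no_cycle[OF Cons.prems(1) pg(1)] by blast
      qed
      let ?E = "edges X - {e}"
      have sE: "set s \<subseteq> ?E" and tE: "set t' \<subseteq> ?E"
        using dpath_edges[OF pe(3)] dpath_edges[OF pg(3)] dpath_distinct[OF Cons.prems(1,2)] \<open>e \<notin> set t'\<close>
        by auto
      have "(tgt X e, b) \<in> (uadj X ?E)\<^sup>*"
        using uadj_mono[OF sE dpath_uadj[OF pe(3)]] .
      also have "(b, tgt X g) \<in> (uadj X ?E)\<^sup>*"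
        using uadj_mono[OF tE uadj_rtrancl_sym[OF dpath_uadj[OF pg(3)]]] .
      also have "(tgt X g, src X e) \<in> uadj X ?E"
        using tgt_src_uadj[of g ?E X] pg pe False by simp
      finally have "(tgt X e, src X e) \<in> (uadj X ?E)\<^sup>*" .
      with forest_bridge(2)[OF Cons.prems(1) pe(1)] show ?thesis by contradiction
    qed
  qed
qed

lemma dpath_edge_at_start:
  assumes fo: "forest X" and p: "dpath X a T b"
    and f: "f \<in> edges X" "src X f = a \<or> tgt X f = a"
  shows "f \<in> set T \<longleftrightarrow> f \<in> set (take 1 T)"
proof
  assume "f \<in> set T"
  then obtain p q where pq: "T = p @ f # q" by (meson split_list)
  then have dp: "dpath X a p (src X f)" using p by (auto simp: dpath_append)
  show "f \<in> set (take 1 T)" using f(2)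
  proof
    assume "src X f = a"
    with dp have "p = []" using forest_closed_dpath[OF fo] by simp
    then show ?thesis using pq by simp
  next
    assume "tgt X f = a"
    moreover have "dpath X a (p @ [f]) (tgt X f)" using dp f(1) by (simp add: dpath_append)
    ultimately have "dpath X a (p @ [f]) a" by simp
    then have "p @ [f] = []" by (rule forest_closed_dpath[OF fo])
    then show ?thesis by simp
  qed
qed (cases T; auto)

lemma dpath_edge_at_inner:
  assumes fo: "forest X" and p: "dpath X a (pre @ e # es) b"
    and f: "f \<in> edges X" "src X f = tgt X e \<or> tgt X f = tgt X e"
  shows "f \<in> set (pre @ e # es) \<longleftrightarrow> f \<in> insert e (set (take 1 es))"
proof
  assume f_in: "f \<in> set (pre @ e # es)"
  obtain m where m: "dpath X a pre m" "dpath X m (e # es) b" using p by (auto simp: dpath_append)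
  then have pe: "dpath X (tgt X e) es b" "e \<in> edges X" by auto
  consider "f = e" | "f \<in> set es" | "f \<in> set pre" using f_in by auto
  then show "f \<in> insert e (set (take 1 es))"
  proof cases
    case 2
    then have "f \<in> set (take 1 es)" using dpath_edge_at_start[OF fo pe(1) f] by simp
    then show ?thesis by simp
  next
    case 3
    then obtain p q where "pre = p @ f # q" by (meson split_list)
    then have q: "dpath X (tgt X f) (q @ [e]) (tgt X e)" using m by (auto simp: dpath_append)
    from f(2) have False
    proof
      assume "src X f = tgt X e"
      with q f(1) have "dpath X (src X f) (f # q @ [e]) (src X f)" by simp
      from forest_closed_dpath[OF fo this] show False by simp
    next
      assume "tgt X f = tgt X e"
      with q have "dpath X (tgt X f) (q @ [e]) (tgt X f)" by simp
      from forest_closed_dpath[OF fo this] show False by simp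
    qed
    then show ?thesis ..
  qed simp
qed (cases es; auto)

lemma is_trunk_trunk: "is_tree X \<Longrightarrow> is_trunk X (trunk X)"
  unfolding is_tree_def trunk_def by (blast intro: someI_ex)

lemma trunk_eqI:
  assumes "forest X" "dpath X (st X) T (en X)"
  shows "trunk X = T"
  unfolding trunk_def
proof (rule some_equality)
  show "is_trunk X T" unfolding is_trunk_def using dpath_distinct[OF assms] assms(2) by simp
  show "s = T" if "is_trunk X s" for s
    using that dpath_unique[OF assms(1) _ assms(2)] unfolding is_trunk_def by simp
qed

definition reach_edges :: "('v, 'e, 's) dtree \<Rightarrow> 'v \<Rightarrow> 'e set \<Rightarrow> 'e set" where
  "reach_edges X v F = {f \<in> edges X - F. (v, src X f) \<in> (uadj X (edges X - F))\<^sup>*}"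

lemma finite_reach_edges: "forest X \<Longrightarrow> finite (reach_edges X v F)"
  unfolding reach_edges_def by (simp add: forest_finite)

text \<open>The recursion of \<open>tau_aux\<close> descends from \<open>v\<close> (with the edges \<open>F\<close> at \<open>v\<close> cut off) to the
  far endpoint \<open>w\<close> of an edge \<open>e \<notin> F\<close> at \<open>v\<close>; the edges reachable from there form a strictly smaller set,
  because in a forest \<open>v\<close> cannot be reached from \<open>w\<close> without \<open>e\<close>.\<close>

lemma reach_edges_child:
  assumes fo: "forest X" and inc: "\<forall>f\<in>F. src X f = v \<or> tgt X f = v"
    and e: "e \<in> edges X" "e \<notin> F"
    and w: "(src X e = v \<and> w = tgt X e) \<or> (tgt X e = v \<and> w = src X e)"
  shows "reach_edges X w {e} \<subseteq> reach_edges X v F - {e}" and "e \<in> reach_edges X v F"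
proof -
  let ?E = "edges X - {e}"
  have vw: "(v, w) \<in> uadj X (edges X - F)"
    using w e src_tgt_uadj[of e "edges X - F" X] tgt_src_uadj[of e "edges X - F" X] by auto
  then show "e \<in> reach_edges X v F"
    using w e unfolding reach_edges_def by (auto intro: r_into_rtrancl)
  have wv: "(w, v) \<notin> (uadj X ?E)\<^sup>*"
    using w forest_bridge[OF fo e(1)] by blast
  have F_at_v: "(y, v) \<in> (uadj X ?E)\<^sup>*" if "(y, z) \<in> uadj X ?E \<or> (z, y) \<in> uadj X ?E"
    "g \<in> F" "g \<in> ?E" "(src X g = y \<and> tgt X g = z) \<or> (src X g = z \<and> tgt X g = y)" for y z g
    using that inc src_tgt_uadj[of g ?E X] tgt_src_uadj[of g ?E X] by auto
  have avoid: "(w, u) \<in> (uadj X (?E - F))\<^sup>*" if "(w, u) \<in> (uadj X ?E)\<^sup>*" for u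
    using that
  proof (induction rule: rtrancl_induct)
    case (step y z)
    from step(2) obtain g where g: "g \<in> ?E" "(src X g = y \<and> tgt X g = z) \<or> (src X g = z \<and> tgt X g = y)"
      unfolding uadj_def by blast
    show ?case
    proof (cases "g \<in> F")
      case True
      then have "(y, v) \<in> (uadj X ?E)\<^sup>*" using F_at_v g step(2) by blast
      with step(1) have "(w, v) \<in> (uadj X ?E)\<^sup>*" by (rule rtrancl_trans)
      with wv show ?thesis by contradiction
    next
      case False
      then have "(y, z) \<in> uadj X (?E - F)" using g unfolding uadj_def by blast
      with step(3) show ?thesis by (rule rtrancl_into_rtrancl)
    qed
  qed simp
  show "reach_edges X w {e} \<subseteq> reach_edges X v F - {e}"
  proof
    fix f assume "f \<in> reach_edges X w {e}"
    then have f: "f \<in> ?E" "(w, src X f) \<in> (uadj X ?E)\<^sup>*"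
      unfolding reach_edges_def by auto
    have "f \<notin> F"
    proof
      assume "f \<in> F"
      then have "(src X f, v) \<in> (uadj X ?E)\<^sup>*"
        using F_at_v[of "src X f" "tgt X f" f] f(1) src_tgt_uadj[of f ?E X] by auto
      with f(2) have "(w, v) \<in> (uadj X ?E)\<^sup>*" by (rule rtrancl_trans)
      with wv show False by contradiction
    qed
    have "(w, src X f) \<in> (uadj X (edges X - F))\<^sup>*"
      using avoid[OF f(2)] by (rule uadj_mono[rotated]) blast
    with vw have "(v, src X f) \<in> (uadj X (edges X - F))\<^sup>*"
      by (rule converse_rtrancl_into_rtrancl)
    then show "f \<in> reach_edges X v F - {e}"
      using f \<open>f \<notin> F\<close> unfolding reach_edges_def by auto
  qed
qed

lemma tau_aux_no_reach:
  assumes fo: "forest X" and inc: "\<forall>f\<in>F. src X f = v \<or> tgt X f = v"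
    and empty: "reach_edges X v F = {}"
  shows "tau_aux m chi X v F = 1"
proof (cases m)
  case (Suc k)
  have "{e \<in> edges X. src X e = v \<and> e \<notin> F} = {}" "{e \<in> edges X. tgt X e = v \<and> e \<notin> F} = {}"
    using reach_edges_child(2)[OF fo inc] empty by fastforce+
  then show ?thesis unfolding Suc tau_aux.simps by (simp only: setprod_empty mult_1)
qed simp

lemma tau_aux_fuel:
  assumes fo: "forest X" and "\<forall>f\<in>F. src X f = v \<or> tgt X f = v"
    and "card (reach_edges X v F) \<le> n" "card (reach_edges X v F) \<le> m"
  shows "tau_aux n chi X v F = tau_aux m chi X v F"
  using assms(2-4)
proof (induction n arbitrary: m v F)
  case 0
  then have "reach_edges X v F = {}" using finite_reach_edges[OF fo] by simp
  then show ?case using tau_aux_no_reach[OF fo 0(1)] by simp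
next
  case (Suc n)
  note inc = Suc.prems(1)
  show ?case
  proof (cases m)
    case 0
    then have "reach_edges X v F = {}" using Suc.prems(3) finite_reach_edges[OF fo] by simp
    then show ?thesis by (simp only: tau_aux_no_reach[OF fo inc])
  next
    case (Suc k)
    have child: "tau_aux n chi X w {e} = tau_aux k chi X w {e}"
      if e: "e \<in> edges X" "e \<notin> F" and w: "(src X e = v \<and> w = tgt X e) \<or> (tgt X e = v \<and> w = src X e)"
      for e w
    proof -
      have "reach_edges X w {e} \<subset> reach_edges X v F"
        using reach_edges_child[OF fo inc e w] by blast
      then have "card (reach_edges X w {e}) < card (reach_edges X v F)"
        using finite_reach_edges[OF fo] psubset_card_mono by blast
      then show ?thesis
        using Suc.IH[of "{e}" w k] Suc.prems(2,3) \<open>m = Suc k\<close> w by auto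
    qed
    have fin: "finite (edges X)" using forest_finite[OF fo] .
    show ?thesis unfolding \<open>m = Suc k\<close> tau_aux.simps
      using child by (intro arg_cong2[where f = "(*)"] setprod_cong) (simp_all add: fin)
  qed
qed

lemma tau_aux_fuel_edge:
  assumes fo: "forest X" and e: "e \<in> edges X" and w: "w = tgt X e \<or> w = src X e"
    and n: "card (edges X) \<le> Suc n"
  shows "tau_aux n chi X w {e} = tau_aux (card (edges X)) chi X w {e}"
proof (rule tau_aux_fuel[OF fo])
  have fin: "finite (edges X)" using forest_finite[OF fo] .
  have "card (reach_edges X w {e}) \<le> card (edges X - {e})"
    using fin by (intro card_mono) (auto simp: reach_edges_def)
  also have "\<dots> = card (edges X) - 1" using e fin by simp
  finally show "card (reach_edges X w {e}) \<le> n" "card (reach_edges X w {e}) \<le> card (edges X)"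
    using n by auto
qed (use w in auto)

section \<open>The rooted values \<open>tau_at\<close>\<close>

definition tau_at :: "('s \<Rightarrow> 'm::monoid_mult) \<Rightarrow> ('v, 'e, 's) dtree \<Rightarrow> 'v \<Rightarrow> 'm" where
  "tau_at chi X v = tau_aux (card (edges X)) chi X v {}"

lemma tau_at_idem:
  "adequate TYPE('m::monoid_mult) \<Longrightarrow> finite (edges X) \<Longrightarrow> idem (tau_at (chi::'s \<Rightarrow> 'm) X v)"
  unfolding tau_at_def by (rule tau_aux_idem)

lemma tau_aux_card_split_out:
  assumes A: "adequate TYPE('m::monoid_mult)" and fo: "forest X" and e: "e \<in> edges X" "e \<notin> F"
  shows "tau_aux (card (edges X)) (chi::'s \<Rightarrow> 'm) X (src X e) F =
         tau_aux (card (edges X)) chi X (src X e) (insert e F) *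
         dplus (chi (lab X e) * tau_aux (card (edges X)) chi X (tgt X e) {e})"
proof -
  have fin: "finite (edges X)" using forest_finite[OF fo] .
  obtain n where n: "card (edges X) = Suc n"
    using e(1) fin by (metis card_0_eq empty_iff not0_implies_Suc)
  have "tau_aux n chi X (tgt X e) {e} = tau_aux (card (edges X)) chi X (tgt X e) {e}"
    by (rule tau_aux_fuel_edge[OF fo e(1)]) (simp_all add: n)
  with tau_aux_split_out[OF A fin e(1) refl forest_no_loop[OF fo e(1), symmetric] e(2)]
  show ?thesis unfolding n by simp
qed

lemma tau_aux_card_split_in:
  assumes A: "adequate TYPE('m::monoid_mult)" and fo: "forest X" and e: "e \<in> edges X" "e \<notin> F"
  shows "tau_aux (card (edges X)) (chi::'s \<Rightarrow> 'm) X (tgt X e) F =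
         tau_aux (card (edges X)) chi X (tgt X e) (insert e F) *
         dstar (tau_aux (card (edges X)) chi X (src X e) {e} * chi (lab X e))"
proof -
  have fin: "finite (edges X)" using forest_finite[OF fo] .
  obtain n where n: "card (edges X) = Suc n"
    using e(1) fin by (metis card_0_eq empty_iff not0_implies_Suc)
  have "tau_aux n chi X (src X e) {e} = tau_aux (card (edges X)) chi X (src X e) {e}"
    by (rule tau_aux_fuel_edge[OF fo e(1)]) (simp_all add: n)
  with tau_aux_split_in[OF A fin e(1) refl forest_no_loop[OF fo e(1)] e(2)]
  show ?thesis unfolding n by simp
qed

lemma edge_absorb_dplus:
  assumes A: "adequate TYPE('m::monoid_mult)" and ia: "idem (a::'m)" and ib: "idem b"
  shows "(b * dplus (c * a)) * dplus (c * (a * dstar (b * c))) = b * dplus (c * a)"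
proof -
  let ?L = "dstar (b * c)" and ?P = "dplus (c * a)"
  have "b * (c * (a * ?L)) = (b * c * ?L) * a"
    using idem_commute[OF A ia dstar_idem[OF A]] by (simp add: mult.assoc)
  then have "b * (c * (a * ?L)) = b * (c * a)"
    by (simp add: mult_dstar_self[OF A] mult.assoc)
  then have bQ: "b * dplus (c * (a * ?L)) = b * ?P"
    by (metis dplus_idem_mult[OF A ib])
  have bP: "b * ?P = ?P * b" using idem_commute[OF A ib dplus_idem[OF A]] .
  have "(b * ?P) * dplus (c * (a * ?L)) = ?P * (b * ?P)" by (simp add: bP bQ mult.assoc)
  also have "\<dots> = b * (?P * ?P)" by (metis bP mult.assoc)
  also have "\<dots> = b * ?P" using dplus_idem[OF A] by (simp add: idem_def)
  finally show ?thesis .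
qed

lemma edge_absorb_dstar:
  assumes A: "adequate TYPE('m::monoid_mult)" and ia: "idem (a::'m)" and ib: "idem b"
  shows "(a * dstar (b * c)) * dstar ((b * dplus (c * a)) * c) = a * dstar (b * c)"
proof -
  let ?L = "dstar (b * c)" and ?D = "dstar ((b * dplus (c * a)) * c)"
  have "?D * a = dstar (b * (dplus (c * a) * (c * a)))"
    by (simp add: dstar_mult_idem[OF A ia, symmetric] mult.assoc)
  also have "\<dots> = ?L * a"
    by (simp add: dplus_mult_self[OF A] dstar_mult_idem[OF A ia, symmetric] mult.assoc)
  finally have Da: "?D * a = ?L * a" .
  have aL: "a * ?L = ?L * a" using idem_commute[OF A ia dstar_idem[OF A]] .
  have aD: "a * ?D = ?D * a" using idem_commute[OF A ia dstar_idem[OF A]] .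
  have "(a * ?L) * ?D = ?L * (a * ?D)" by (simp add: aL mult.assoc)
  also have "\<dots> = ?L * (?L * a)" by (simp only: aD Da)
  also have "\<dots> = ?L * a" using dstar_idem[OF A] by (simp add: idem_def mult.assoc[symmetric])
  finally show ?thesis using aL by simp
qed

lemma tau_at_edge:
  assumes A: "adequate TYPE('m::monoid_mult)" and fo: "forest Z" and e: "e \<in> edges Z"
  shows "tau_at (chi::'s \<Rightarrow> 'm) Z (src Z e) * dplus (chi (lab Z e) * tau_at chi Z (tgt Z e)) =
           tau_at chi Z (src Z e)"
    and "tau_at chi Z (tgt Z e) * dstar (tau_at chi Z (src Z e) * chi (lab Z e)) =
           tau_at chi Z (tgt Z e)"
proof -
  let ?N = "card (edges Z)"
  let ?a = "tau_aux ?N chi Z (tgt Z e) {e}" and ?b = "tau_aux ?N chi Z (src Z e) {e}"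
  have ia: "idem ?a" "idem ?b" using tau_aux_idem[OF A forest_finite[OF fo]] by blast+
  have src: "tau_at chi Z (src Z e) = ?b * dplus (chi (lab Z e) * ?a)"
    unfolding tau_at_def using tau_aux_card_split_out[OF A fo e, of "{}"] by simp
  have tgt: "tau_at chi Z (tgt Z e) = ?a * dstar (?b * chi (lab Z e))"
    unfolding tau_at_def using tau_aux_card_split_in[OF A fo e, of "{}"] by simp
  show "tau_at chi Z (src Z e) * dplus (chi (lab Z e) * tau_at chi Z (tgt Z e)) = tau_at chi Z (src Z e)"
    unfolding src tgt by (rule edge_absorb_dplus[OF A ia])
  show "tau_at chi Z (tgt Z e) * dstar (tau_at chi Z (src Z e) * chi (lab Z e)) = tau_at chi Z (tgt Z e)"
    unfolding src tgt by (rule edge_absorb_dstar[OF A ia])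
qed

definition edge_hom :: "('v, 'e, 's) dtree \<Rightarrow> ('w, 'f, 's) dtree \<Rightarrow> ('v \<Rightarrow> 'w) \<Rightarrow> ('e \<Rightarrow> 'f) \<Rightarrow> bool" where
  "edge_hom X Z gV gE \<longleftrightarrow> (\<forall>a\<in>edges X. gE a \<in> edges Z \<and> src Z (gE a) = gV (src X a) \<and>
      tgt Z (gE a) = gV (tgt X a) \<and> lab Z (gE a) = lab X a)"

lemma morphism_edge_hom: "morphism X Y gV gE \<Longrightarrow> edge_hom X Y gV gE"
  unfolding morphism_def edge_hom_def by blast

lemma dpath_edge_hom:
  "edge_hom X Y gV gE \<Longrightarrow> dpath X u es w \<Longrightarrow> dpath Y (gV u) (map gE es) (gV w)"
  unfolding edge_hom_def by (induction es arbitrary: u) auto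

text \<open>Induction along the recursion of \<open>tau_aux\<close>: \<open>tau_at_edge\<close> at the image of each edge,
  combined with monotonicity of \<open>dplus\<close> and \<open>dstar\<close> in the natural order.\<close>

lemma tau_at_absorbs_tau_aux:
  assumes A: "adequate TYPE('m::monoid_mult)" and fo: "forest Z" and fin: "finite (edges X)"
    and g: "edge_hom X Z gV gE"
  shows "tau_at (chi::'s \<Rightarrow> 'm) Z (gV x) * tau_aux n chi X x F = tau_at chi Z (gV x)"
proof (induction n arbitrary: x F)
  case (Suc n)
  let ?phi = "tau_at chi Z (gV x)"
  have absorb: "?phi * d' = ?phi" if "?phi * d = ?phi" "d * d' = d" for d d'
    by (metis that mult.assoc)
  have out: "?phi * dplus (chi (lab X a) * tau_aux n chi X (tgt X a) {a}) = ?phi"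
    if a: "a \<in> edges X" "src X a = x" for a
  proof (rule absorb)
    let ?psi = "tau_at chi Z (gV (tgt X a))"
    have ga: "gE a \<in> edges Z" "src Z (gE a) = gV x" "tgt Z (gE a) = gV (tgt X a)" "lab Z (gE a) = lab X a"
      using g a unfolding edge_hom_def by auto
    show "?phi * dplus (chi (lab X a) * ?psi) = ?phi"
      using tau_at_edge(1)[OF A fo ga(1), of chi] ga by simp
    show "dplus (chi (lab X a) * ?psi) * dplus (chi (lab X a) * tau_aux n chi X (tgt X a) {a}) =
          dplus (chi (lab X a) * ?psi)"
      by (rule dplus_mult_mono[OF A tau_at_idem[OF A forest_finite[OF fo]] tau_aux_idem[OF A fin] Suc.IH])
  qed
  have into: "?phi * dstar (tau_aux n chi X (src X a) {a} * chi (lab X a)) = ?phi"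
    if a: "a \<in> edges X" "tgt X a = x" for a
  proof (rule absorb)
    let ?psi = "tau_at chi Z (gV (src X a))"
    have ga: "gE a \<in> edges Z" "tgt Z (gE a) = gV x" "src Z (gE a) = gV (src X a)" "lab Z (gE a) = lab X a"
      using g a unfolding edge_hom_def by auto
    show "?phi * dstar (?psi * chi (lab X a)) = ?phi"
      using tau_at_edge(2)[OF A fo ga(1), of chi] ga by simp
    show "dstar (?psi * chi (lab X a)) * dstar (tau_aux n chi X (src X a) {a} * chi (lab X a)) =
          dstar (?psi * chi (lab X a))"
      by (rule dstar_mult_mono[OF A Suc.IH])
  qed
  have "?phi * setprod (\<lambda>e. dplus (chi (lab X e) * tau_aux n chi X (tgt X e) {e}))
                 {e \<in> edges X. src X e = x \<and> e \<notin> F} = ?phi"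
    by (rule setprod_absorb) (use fin out in auto)
  moreover have "?phi * setprod (\<lambda>e. dstar (tau_aux n chi X (src X e) {e} * chi (lab X e)))
                 {e \<in> edges X. tgt X e = x \<and> e \<notin> F} = ?phi"
    by (rule setprod_absorb) (use fin into in auto)
  ultimately show ?case
    unfolding tau_aux.simps mult.assoc[symmetric] by simp
qed simp

lemma tau_at_eq_if_edge_homs:
  assumes A: "adequate TYPE('m::monoid_mult)" and fo: "forest X" "forest Z"
    and g: "edge_hom X Z gV gE" and h: "edge_hom Z X hV hE" and "gV v = w" "hV w = v"
  shows "tau_at (chi::'s \<Rightarrow> 'm) X v = tau_at chi Z w"
proof -
  have "tau_at chi Z w * tau_at chi X v = tau_at chi Z w"
    using tau_at_absorbs_tau_aux[OF A fo(2) forest_finite[OF fo(1)] g] assms(6)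
    unfolding tau_at_def[of chi X] by blast
  moreover have "tau_at chi X v * tau_at chi Z w = tau_at chi X v"
    using tau_at_absorbs_tau_aux[OF A fo(1) forest_finite[OF fo(2)] h] assms(7)
    unfolding tau_at_def[of chi Z] by blast
  ultimately show ?thesis
    using idem_commute[OF A tau_at_idem[OF A forest_finite[OF fo(1)]] tau_at_idem[OF A forest_finite[OF fo(2)]]]
    by metis
qed

section \<open>\<open>rho\<close> in terms of rooted values\<close>

lemma rho_eq_prod_list:
  "trunk X = T \<Longrightarrow> rho chi X = tau_aux (card (edges X)) chi X (st X) (set T) *
      (\<Prod>e\<leftarrow>T. chi (lab X e) * tau_aux (card (edges X)) chi X (tgt X e) (set T))"
  by (simp add: rho_def Let_def prod_list.eq_foldr foldr_map comp_def)

lemma trunk_step_algebra: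
  assumes A: "adequate TYPE('m::monoid_mult)" and ix: "idem (x::'m)"
    and xr: "x * r = r" and Wl: "W * l = W"
  shows "(W * c * x) * (x * dstar (l * c)) = W * c * x"
    and "W * (l * dplus (c * r)) * (c * (r * dstar (l * c)) * y) = (W * c * x) * (r * dstar (l * c)) * y"
proof -
  let ?L = "dstar (l * c)"
  have Wc: "W * c * ?L = W * c"
    using Wl mult_dstar_self[OF A, of "l * c"] by (metis mult.assoc)
  have "(W * c * x) * (x * ?L) = W * c * (x * ?L)"
    using ix unfolding idem_def by (metis mult.assoc)
  also have "\<dots> = (W * c * ?L) * x"
    using idem_commute[OF A ix dstar_idem[OF A]] by (simp add: mult.assoc)
  finally show "(W * c * x) * (x * ?L) = W * c * x" by (simp only: Wc)
  have "W * (l * dplus (c * r)) * (c * (r * ?L) * y) = (W * l) * (dplus (c * r) * (c * r)) * ?L * y"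
    by (simp add: mult.assoc)
  also have "\<dots> = W * c * (x * r) * ?L * y"
    by (simp only: Wl dplus_mult_self[OF A] xr mult.assoc)
  finally show "W * (l * dplus (c * r)) * (c * (r * ?L) * y) = (W * c * x) * (r * ?L) * y"
    by (simp add: mult.assoc)
qed

lemma tau_aux_at_trunk_vertex:
  assumes A: "adequate TYPE('m::monoid_mult)" and fo: "forest X"
    and T: "dpath X a (pre @ e # es) b"
  defines "N \<equiv> card (edges X)"
  shows "tau_aux N (chi::'s \<Rightarrow> 'm) X (tgt X e) (set (take 1 es)) =
           tau_aux N chi X (tgt X e) (set (pre @ e # es)) * dstar (tau_aux N chi X (src X e) {e} * chi (lab X e))"
    and "tau_aux N chi X (tgt X e) (set (pre @ e # es)) * tau_aux N chi X (tgt X e) {e} =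
           tau_aux N chi X (tgt X e) {e}"
proof -
  let ?w = "tgt X e" and ?T = "set (pre @ e # es)"
  let ?x = "tau_aux N chi X ?w ?T" and ?r = "tau_aux N chi X ?w {e}"
  let ?L = "dstar (tau_aux N chi X (src X e) {e} * chi (lab X e))"
  have fin: "finite (edges X)" using forest_finite[OF fo] .
  have e: "e \<in> edges X" and es: "dpath X ?w es b" using T by (auto simp: dpath_append)
  have incw: "f \<in> ?T \<longleftrightarrow> f \<in> insert e (set (take 1 es))" if "f \<in> edges X" "src X f = ?w \<or> tgt X f = ?w" for f
    using dpath_edge_at_inner[OF fo T that] .
  have split_e: "tau_aux N chi X ?w F = tau_aux N chi X ?w (insert e F) * ?L" if "e \<notin> F" for F
    unfolding N_def using tau_aux_card_split_in[OF A fo e that] .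
  have "tau_aux N chi X ?w (set (take 1 es)) = ?x * ?L \<and> ?x * ?r = ?r"
  proof (cases es)
    case Nil
    then have "?r = ?x" using incw by (intro tau_aux_removed_cong) auto
    then show ?thesis
      using split_e[of "{}"] tau_aux_idem[OF A fin, of N chi ?w "{e}"] Nil by (simp add: idem_def)
  next
    case (Cons f es')
    have f: "f \<in> edges X" "src X f = ?w" "e \<noteq> f"
      using es Cons dpath_distinct[OF fo T] by auto
    have x: "?x = tau_aux N chi X ?w {e, f}" using incw Cons by (intro tau_aux_removed_cong) auto
    have "?r = ?x * dplus (chi (lab X f) * tau_aux N chi X (tgt X f) {f})"
      using tau_aux_card_split_out[OF A fo f(1), of "{e}" chi] f x unfolding N_def by (simp add: insert_commute)
    then show ?thesis
      using split_e[of "{f}"] x tau_aux_idem[OF A fin, of N chi ?w "{e, f}"] f(3) Cons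
      by (simp add: idem_def mult.assoc[symmetric] insert_commute)
  qed
  then show "tau_aux N chi X ?w (set (take 1 es)) = ?x * ?L" "?x * ?r = ?r" by simp_all
qed

text \<open>Induction along the trunk; the left factor \<open>W\<close>, which absorbs the value at the current trunk
  vertex \<open>u\<close> with only the next trunk edge cut, is the generalisation that makes it go through.\<close>

lemma tau_at_trunk_suffix:
  assumes A: "adequate TYPE('m::monoid_mult)" and fo: "forest X"
  shows "dpath X a (pre @ es) b \<Longrightarrow> dpath X u es b \<Longrightarrow>
    W * tau_aux (card (edges X)) chi X u (set (take 1 es)) = W \<Longrightarrow>
    W * tau_at chi X u * (\<Prod>e\<leftarrow>es. chi (lab X e) * tau_at chi X (tgt X e)) =
    W * (\<Prod>e\<leftarrow>es. chi (lab X e) * tau_aux (card (edges X)) (chi::'s \<Rightarrow> 'm) X (tgt X e) (set (pre @ es)))"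
proof (induction es arbitrary: pre u W)
  case Nil
  then show ?case by (simp add: tau_at_def)
next
  case (Cons e es)
  let ?N = "card (edges X)" and ?w = "tgt X e" and ?c = "chi (lab X e)"
  let ?x = "\<lambda>v. tau_aux ?N chi X v (set (pre @ e # es))"
  let ?l = "tau_aux ?N chi X u {e}" and ?r = "tau_aux ?N chi X ?w {e}"
  let ?L = "dstar (?l * ?c)"
  have fin: "finite (edges X)" using forest_finite[OF fo] .
  have e: "e \<in> edges X" "src X e = u" "dpath X ?w es b" using Cons.prems(2) by auto
  have tau_u: "tau_at chi X u = ?l * dplus (?c * ?r)"
    unfolding tau_at_def using tau_aux_card_split_out[OF A fo e(1), of "{}" chi] e(2) by simp
  have tau_w: "tau_at chi X ?w = ?r * ?L"
    unfolding tau_at_def using tau_aux_card_split_in[OF A fo e(1), of "{}" chi] e(2) by simp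
  note vertex = tau_aux_at_trunk_vertex[OF A fo Cons.prems(1), of chi, unfolded e(2)]
  have Wl: "W * ?l = W" using Cons.prems(3) by simp
  note alg = trunk_step_algebra[OF A tau_aux_idem[OF A fin] vertex(2) Wl, where c = ?c]
  have "W * ?c * ?x ?w * tau_aux ?N chi X ?w (set (take 1 es)) = W * ?c * ?x ?w"
    unfolding vertex(1) using alg(1) .
  then have IH: "(W * ?c * ?x ?w) * tau_at chi X ?w * (\<Prod>e\<leftarrow>es. chi (lab X e) * tau_at chi X (tgt X e)) =
            (W * ?c * ?x ?w) * (\<Prod>e\<leftarrow>es. chi (lab X e) * ?x (tgt X e))"
    using Cons.IH[of "pre @ [e]" ?w "W * ?c * ?x ?w"] Cons.prems(1) e(3) by simp
  have "W * tau_at chi X u * (\<Prod>e\<leftarrow>e # es. chi (lab X e) * tau_at chi X (tgt X e)) =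
        W * (?l * dplus (?c * ?r)) * (?c * (?r * ?L) * (\<Prod>e\<leftarrow>es. chi (lab X e) * tau_at chi X (tgt X e)))"
    by (simp add: tau_u tau_w mult.assoc)
  also have "\<dots> = (W * ?c * ?x ?w) * tau_at chi X ?w * (\<Prod>e\<leftarrow>es. chi (lab X e) * tau_at chi X (tgt X e))"
    unfolding alg(2) tau_w ..
  also have "\<dots> = W * (\<Prod>e\<leftarrow>e # es. chi (lab X e) * ?x (tgt X e))"
    unfolding IH by (simp add: mult.assoc)
  finally show ?case .
qed

lemma rho_eq_tau_at:
  assumes A: "adequate TYPE('m::monoid_mult)" and fo: "forest X"
    and T: "trunk X = T" "dpath X (st X) T (en X)"
  shows "rho (chi::'s \<Rightarrow> 'm) X =
           tau_at chi X (st X) * (\<Prod>e\<leftarrow>T. chi (lab X e) * tau_at chi X (tgt X e))"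
proof -
  let ?N = "card (edges X)"
  let ?x = "tau_aux ?N chi X (st X) (set T)"
  have fin: "finite (edges X)" using forest_finite[OF fo] .
  have ix: "idem ?x" using tau_aux_idem[OF A fin] .
  have first: "tau_aux ?N chi X (st X) (set (take 1 T)) = ?x"
    by (rule tau_aux_removed_cong) (use dpath_edge_at_start[OF fo T(2)] in auto)
  have x_le: "?x * tau_at chi X (st X) = tau_at chi X (st X)"
  proof (cases T)
    case Nil
    then show ?thesis using ix by (simp add: tau_at_def idem_def)
  next
    case (Cons e T')
    have e: "e \<in> edges X" "src X e = st X" using T(2) Cons by auto
    have "tau_at chi X (st X) = tau_aux ?N chi X (st X) {e} * dplus (chi (lab X e) * tau_aux ?N chi X (tgt X e) {e})"
      unfolding tau_at_def using tau_aux_card_split_out[OF A fo e(1), of "{}" chi] e(2) by simp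
    moreover have "tau_aux ?N chi X (st X) {e} = ?x" using first Cons by simp
    ultimately show ?thesis using ix by (simp add: idem_def mult.assoc[symmetric])
  qed
  have "?x * tau_at chi X (st X) * (\<Prod>e\<leftarrow>T. chi (lab X e) * tau_at chi X (tgt X e)) =
        ?x * (\<Prod>e\<leftarrow>T. chi (lab X e) * tau_aux ?N chi X (tgt X e) (set T))"
    using tau_at_trunk_suffix[OF A fo, of "st X" "[]" T "en X" "st X" ?x chi] T(2) first ix
    by (simp add: idem_def)
  then show ?thesis
    unfolding x_le rho_eq_prod_list[OF T(1)] by (rule sym)
qed

section \<open>Invariance under isomorphism\<close>

lemma image_incident_edges:
  assumes "inj_on gV V" "inj_on gE E" "gE ` E = E'" "\<forall>e\<in>E. p e \<in> V \<and> q (gE e) = gV (p e)"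
    and "v \<in> V" "F \<subseteq> E"
  shows "{e' \<in> E'. q e' = gV v \<and> e' \<notin> gE ` F} = gE ` {e \<in> E. p e = v \<and> e \<notin> F}"
proof (intro equalityI subsetI)
  fix e' assume "e' \<in> {e' \<in> E'. q e' = gV v \<and> e' \<notin> gE ` F}"
  then obtain e where e: "e \<in> E" "e' = gE e" "q (gE e) = gV v" "gE e \<notin> gE ` F"
    using assms(3) by blast
  then have "p e = v" using assms(1,4,5) inj_onD[OF assms(1)] by metis
  then show "e' \<in> gE ` {e \<in> E. p e = v \<and> e \<notin> F}" using e by blast
next
  fix e' assume "e' \<in> gE ` {e \<in> E. p e = v \<and> e \<notin> F}"
  then obtain e where e: "e \<in> E" "e' = gE e" "p e = v" "e \<notin> F" by blast
  then have "gE e \<notin> gE ` F" using inj_on_image_mem_iff[OF assms(2) e(1) assms(6)] by simp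
  then show "e' \<in> {e' \<in> E'. q e' = gV v \<and> e' \<notin> gE ` F}" using e assms(3,4) by auto
qed

lemma tau_aux_isomorphism:
  assumes A: "adequate TYPE('m::monoid_mult)" and fin: "finite (edges R)"
    and iso: "isomorphism R Y gV gE"
    and ends: "\<forall>e\<in>edges R. src R e \<in> verts R \<and> tgt R e \<in> verts R"
    and "v \<in> verts R" "F \<subseteq> edges R"
  shows "tau_aux n (chi::'s \<Rightarrow> 'm) Y (gV v) (gE ` F) = tau_aux n chi R v F"
  using assms(5,6)
proof (induction n arbitrary: v F)
  case (Suc n)
  have hom: "edge_hom R Y gV gE" using iso unfolding isomorphism_def by (blast intro: morphism_edge_hom)
  have ivg: "inj_on gV (verts R)" and ieg: "inj_on gE (edges R)" "gE ` edges R = edges Y"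
    using iso unfolding isomorphism_def bij_betw_def by blast+
  have out: "{e' \<in> edges Y. src Y e' = gV v \<and> e' \<notin> gE ` F} = gE ` {e \<in> edges R. src R e = v \<and> e \<notin> F}"
    by (rule image_incident_edges[OF ivg ieg]) (use hom ends Suc.prems in \<open>auto simp: edge_hom_def\<close>)
  have into: "{e' \<in> edges Y. tgt Y e' = gV v \<and> e' \<notin> gE ` F} = gE ` {e \<in> edges R. tgt R e = v \<and> e \<notin> F}"
    by (rule image_incident_edges[OF ivg ieg]) (use hom ends Suc.prems in \<open>auto simp: edge_hom_def\<close>)
  have IH: "tau_aux n chi Y (gV w) {gE e} = tau_aux n chi R w {e}" if "e \<in> edges R" "w \<in> verts R" for e w
    using Suc.IH[of w "{e}"] that by simp
  have reindex: "setprod h (gE ` S) = setprod (h \<circ> gE) S"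
    if "S \<subseteq> edges R" "\<forall>e'\<in>gE ` S. idem (h e')" for S and h :: "_ \<Rightarrow> 'm"
    using that fin ieg(1) by (intro setprod_reindex[OF A]) (auto intro: finite_subset inj_on_subset)
  let ?out = "{e \<in> edges R. src R e = v \<and> e \<notin> F}" and ?into = "{e \<in> edges R. tgt R e = v \<and> e \<notin> F}"
  have "setprod (\<lambda>e. dplus (chi (lab Y e) * tau_aux n chi Y (tgt Y e) {e})) (gE ` ?out) =
        setprod (\<lambda>e. dplus (chi (lab R e) * tau_aux n chi R (tgt R e) {e})) ?out"
    using hom ends fin IH
    by (subst reindex) (auto simp: dplus_idem[OF A] edge_hom_def intro!: setprod_cong)
  moreover have "setprod (\<lambda>e. dstar (tau_aux n chi Y (src Y e) {e} * chi (lab Y e))) (gE ` ?into) =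
        setprod (\<lambda>e. dstar (tau_aux n chi R (src R e) {e} * chi (lab R e))) ?into"
    using hom ends fin IH
    by (subst reindex) (auto simp: dstar_idem[OF A] edge_hom_def intro!: setprod_cong)
  ultimately show ?case
    unfolding tau_aux.simps out into by simp
qed simp

lemma dpath_isomorphism_reflect:
  assumes iso: "isomorphism R Y gV gE"
    and ends: "\<forall>e\<in>edges R. src R e \<in> verts R \<and> tgt R e \<in> verts R" and z: "z \<in> verts R"
  shows "u \<in> verts R \<Longrightarrow> dpath Y (gV u) ss (gV z) \<Longrightarrow> dpath R u (map (inv_into (edges R) gE) ss) z"
proof (induction ss arbitrary: u)
  have hom: "edge_hom R Y gV gE" using iso unfolding isomorphism_def by (blast intro: morphism_edge_hom)
  have ivg: "inj_on gV (verts R)" and ieg: "gE ` edges R = edges Y"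
    using iso unfolding isomorphism_def bij_betw_def by blast+
  {
    case Nil
    then show ?case using inj_onD[OF ivg _ Nil(1) z] by simp
  next
    case (Cons e' ss)
    let ?e = "inv_into (edges R) gE e'"
    have e': "e' \<in> edges Y" "src Y e' = gV u" "dpath Y (tgt Y e') ss (gV z)" using Cons.prems(2) by auto
    then have e: "?e \<in> edges R" "gE ?e = e'" using ieg by (metis inv_into_into, metis f_inv_into_f)
    then have "gV (src R ?e) = gV u" "tgt Y e' = gV (tgt R ?e)"
      using hom e'(2) unfolding edge_hom_def by metis+
    then have "src R ?e = u" "dpath R (tgt R ?e) (map (inv_into (edges R) gE) ss) z"
      using inj_onD[OF ivg] ends e(1) Cons.prems(1) Cons.IH e'(3) by auto
    then show ?case using e(1) by simp
  }
qed

lemma rho_isomorphism: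
  assumes A: "adequate TYPE('m::monoid_mult)" and tree: "is_tree R" and iso: "isomorphism R Y gV gE"
  shows "rho (chi::'s \<Rightarrow> 'm) Y = rho chi R"
proof -
  define T where "T = trunk R"
  have fo: "forest R" using tree_forest[OF tree] .
  have fin: "finite (edges R)" using forest_finite[OF fo] .
  have ends: "\<forall>e\<in>edges R. src R e \<in> verts R \<and> tgt R e \<in> verts R" "st R \<in> verts R" "en R \<in> verts R"
    using tree unfolding is_tree_def by blast+
  have dT: "dpath R (st R) T (en R)" and distT: "distinct T"
    using is_trunk_trunk[OF tree] unfolding T_def is_trunk_def by blast+
  have TR: "set T \<subseteq> edges R" using dpath_edges[OF dT] .
  have mor: "morphism R Y gV gE" and ieg: "inj_on gE (edges R)" "gE ` edges R = edges Y"
    using iso unfolding isomorphism_def bij_betw_def by blast+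
  have hom: "edge_hom R Y gV gE" using morphism_edge_hom[OF mor] .
  have st_en: "gV (st R) = st Y" "gV (en R) = en Y" using mor unfolding morphism_def by blast+
  have trY: "trunk Y = map gE T"
    unfolding trunk_def
  proof (rule some_equality)
    show "is_trunk Y (map gE T)"
      unfolding is_trunk_def using dpath_edge_hom[OF hom dT] st_en distT inj_on_subset[OF ieg(1) TR]
      by (simp add: distinct_map)
  next
    fix s assume "is_trunk Y s"
    then have s: "dpath Y (gV (st R)) s (gV (en R))" unfolding is_trunk_def st_en by blast
    then have "map (inv_into (edges R) gE) s = T"
      using dpath_isomorphism_reflect[OF iso ends(1,3) ends(2) s] dpath_unique[OF fo _ dT] by blast
    moreover have "set s \<subseteq> edges Y" using dpath_edges[OF s] .
    then have "map gE (map (inv_into (edges R) gE) s) = s"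
      using ieg(2) by (induction s) (auto simp: f_inv_into_f)
    ultimately show "s = map gE T" by simp
  qed
  have card: "card (edges Y) = card (edges R)"
    using iso unfolding isomorphism_def by (metis bij_betw_same_card)
  have tau: "tau_aux (card (edges Y)) chi Y (gV v) (set (map gE T)) = tau_aux (card (edges R)) chi R v (set T)"
    if "v \<in> verts R" for v
    using tau_aux_isomorphism[OF A fin iso ends(1) that TR] card by simp
  have "rho chi Y = tau_aux (card (edges R)) chi R (st R) (set T) *
          (\<Prod>e\<leftarrow>map gE T. chi (lab Y e) * tau_aux (card (edges Y)) chi Y (tgt Y e) (set (map gE T)))"
    unfolding rho_eq_prod_list[OF trY] using tau[OF ends(2)] st_en by simp
  also have "(\<Prod>e\<leftarrow>map gE T. chi (lab Y e) * tau_aux (card (edges Y)) chi Y (tgt Y e) (set (map gE T))) =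
             (\<Prod>e\<leftarrow>T. chi (lab R e) * tau_aux (card (edges R)) chi R (tgt R e) (set T))"
    using TR hom ends(1) tau unfolding edge_hom_def
    by (auto simp: comp_def intro!: arg_cong[where f = prod_list] map_cong)
  finally show ?thesis unfolding rho_eq_prod_list[OF T_def[symmetric]] .
qed

section \<open>Invariance under passage to an endomorphic image\<close>

lemma retract_img_simps [simp]:
  "verts (retract_img X fV fE) = fV ` verts X" "edges (retract_img X fV fE) = fE ` edges X"
  "src (retract_img X fV fE) = src X" "tgt (retract_img X fV fE) = tgt X"
  "lab (retract_img X fV fE) = lab X" "st (retract_img X fV fE) = st X" "en (retract_img X fV fE) = en X"
  by (simp_all add: retract_img_def)

lemma uadj_image:
  assumes "edge_hom X X fV fE" "(a, b) \<in> (uadj X (edges X))\<^sup>*"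
  shows "(fV a, fV b) \<in> (uadj X (fE ` edges X))\<^sup>*"
  using assms(2)
proof (induction rule: rtrancl_induct)
  case (step y z)
  then obtain e where e: "e \<in> edges X" "(src X e = y \<and> tgt X e = z) \<or> (src X e = z \<and> tgt X e = y)"
    unfolding uadj_def by blast
  then have "fE e \<in> fE ` edges X" by simp
  then have "(src X (fE e), tgt X (fE e)) \<in> uadj X (fE ` edges X)"
    "(tgt X (fE e), src X (fE e)) \<in> uadj X (fE ` edges X)"
    by (simp_all add: src_tgt_uadj tgt_src_uadj)
  moreover have "src X (fE e) = fV (src X e)" "tgt X (fE e) = fV (tgt X e)"
    using assms(1) e(1) unfolding edge_hom_def by simp_all
  ultimately have "(fV y, fV z) \<in> uadj X (fE ` edges X)" using e(2) by auto
  with step.IH show ?case by (rule rtrancl_into_rtrancl)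
qed simp

lemma is_tree_endomorphic_image:
  assumes tree: "is_tree X" and mor: "morphism X X fV fE"
  shows "is_tree (retract_img X fV fE)" (is "is_tree ?R")
proof -
  have hom: "edge_hom X X fV fE" using morphism_edge_hom[OF mor] .
  have fix_ends: "fV (st X) = st X" "fV (en X) = en X" using mor unfolding morphism_def by blast+
  have sub: "fE ` edges X \<subseteq> edges X" using hom unfolding edge_hom_def by blast
  have uadj_R: "uadj ?R F = uadj X F" for F unfolding uadj_def by simp
  have fo: "forest X" using tree_forest[OF tree] .
  have fo_R: "forest ?R"
    unfolding forest_def
  proof (intro conjI ballI)
    show "finite (edges ?R)" using forest_finite[OF fo] by simp
    fix e assume "e \<in> edges ?R"
    then have e: "e \<in> edges X" using sub by auto
    show "(src ?R e, tgt ?R e) \<notin> (uadj ?R (edges ?R - {e}))\<^sup>*"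
    proof
      assume "(src ?R e, tgt ?R e) \<in> (uadj ?R (edges ?R - {e}))\<^sup>*"
      then have "(src X e, tgt X e) \<in> (uadj X (fE ` edges X - {e}))\<^sup>*" by (simp add: uadj_R)
      then have "(src X e, tgt X e) \<in> (uadj X (edges X - {e}))\<^sup>*"
        by (rule uadj_mono[rotated]) (use sub in blast)
      with forest_bridge(1)[OF fo e] show False by contradiction
    qed
  qed
  obtain T where T: "dpath X (st X) T (en X)" using tree unfolding is_tree_def is_trunk_def by blast
  have "dpath ?R (st ?R) (map fE T) (en ?R)"
    using dpath_edge_hom[OF _ T, of ?R fV fE] hom fix_ends unfolding edge_hom_def by auto
  then have "is_trunk ?R (map fE T)"
    unfolding is_trunk_def using dpath_distinct[OF fo_R] by blast
  moreover have "(u, w) \<in> (uadj ?R (edges ?R))\<^sup>*" if "u \<in> verts ?R" "w \<in> verts ?R" for u w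
    using that tree uadj_image[OF hom] unfolding uadj_R is_tree_def by auto
  moreover have "st X \<in> fV ` verts X" "en X \<in> fV ` verts X"
    using tree fix_ends unfolding is_tree_def by (metis image_eqI)+
  moreover have "src X e \<in> fV ` verts X \<and> tgt X e \<in> fV ` verts X" if "e \<in> fE ` edges X" for e
    using that hom tree unfolding edge_hom_def is_tree_def by auto
  moreover have "finite (fV ` verts X)" using tree unfolding is_tree_def by simp
  ultimately show ?thesis
    using fo_R unfolding is_tree_def forest_def by auto
qed

lemma rho_endomorphic_image:
  assumes A: "adequate TYPE('m::monoid_mult)" and tree: "is_tree X" and mor: "morphism X X fV fE"
  shows "rho (chi::'s \<Rightarrow> 'm) (retract_img X fV fE) = rho chi X"
proof -
  let ?R = "retract_img X fV fE"
  define T where "T = trunk X"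
  have fo: "forest X" using tree_forest[OF tree] .
  have fo_R: "forest ?R" using tree_forest[OF is_tree_endomorphic_image[OF tree mor]] .
  have hom: "edge_hom X X fV fE" using morphism_edge_hom[OF mor] .
  have fix_ends: "fV (st X) = st X" "fV (en X) = en X" using mor unfolding morphism_def by blast+
  have dT: "dpath X (st X) T (en X)" using is_trunk_trunk[OF tree] unfolding T_def is_trunk_def by blast
  have "dpath X (st X) (map fE T) (en X)" using dpath_edge_hom[OF hom dT] fix_ends by simp
  then have "map fE T = T" by (rule dpath_unique[OF fo _ dT])
  then have "map fE T = map id T" by simp
  then have fixed: "fE e = e" if "e \<in> set T" for e
    using that unfolding map_eq_conv by simp
  have T_R: "set T \<subseteq> edges ?R"
    using fixed dpath_edges[OF dT] by (force simp: image_iff)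
  have "dpath ?R u es w" if "dpath X u es w" "set es \<subseteq> edges ?R" for u es w
    using that by (induction es arbitrary: u) auto
  then have dT_R: "dpath ?R (st ?R) T (en ?R)" using dT T_R by simp
  then have trunk_R: "trunk ?R = T" by (rule trunk_eqI[OF fo_R])
  have same_tau: "tau_at chi ?R v = tau_at chi X v" if "fV v = v" for v
  proof (rule tau_at_eq_if_edge_homs[OF A fo_R fo])
    show "edge_hom ?R X id id" using hom unfolding edge_hom_def by auto
    show "edge_hom X ?R fV fE" using hom unfolding edge_hom_def by auto
  qed (simp_all add: that)
  have tgt_fixed: "fV (tgt X e) = tgt X e" if "e \<in> set T" for e
    using hom fixed[OF that] dpath_edges[OF dT] that unfolding edge_hom_def by force
  have "rho chi ?R = tau_at chi ?R (st X) * (\<Prod>e\<leftarrow>T. chi (lab X e) * tau_at chi ?R (tgt X e))"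
    using rho_eq_tau_at[OF A fo_R trunk_R dT_R] by simp
  also have "\<dots> = tau_at chi X (st X) * (\<Prod>e\<leftarrow>T. chi (lab X e) * tau_at chi X (tgt X e))"
  proof -
    have "map (\<lambda>e. chi (lab X e) * tau_at chi ?R (tgt X e)) T = map (\<lambda>e. chi (lab X e) * tau_at chi X (tgt X e)) T"
      by (rule map_cong) (simp_all add: same_tau tgt_fixed)
    then show ?thesis using same_tau[OF fix_ends(1)] by (simp only:)
  qed
  also have "\<dots> = rho chi X"
    using rho_eq_tau_at[OF A fo T_def[symmetric] dT] by simp
  finally show ?thesis .
qed

theorem corollary5p13:
  fixes chi :: "'s \<Rightarrow> 'm::monoid_mult"
    and X :: "('v, 'e, 's) dtree"
    and fV :: "'v \<Rightarrow> 'v" and fE :: "'e \<Rightarrow> 'e"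
    and Y :: "('w, 'f, 's) dtree"
    and gV :: "'v \<Rightarrow> 'w" and gE :: "'e \<Rightarrow> 'f"
  assumes "adequate TYPE('m)"
    and "is_tree X"
    and "retraction X fV fE"
    and "pruned (retract_img X fV fE)"
    and "isomorphism (retract_img X fV fE) Y gV gE"
  shows "rho chi X = rho chi Y"
proof -
  have mor: "morphism X X fV fE" using assms(3) unfolding retraction_def by blast
  have "rho chi X = rho chi (retract_img X fV fE)"
    using rho_endomorphic_image[OF assms(1,2) mor] by simp
  also have "\<dots> = rho chi Y"
    using rho_isomorphism[OF assms(1) is_tree_endomorphic_image[OF assms(2) mor] assms(5)] by simp
  finally show ?thesis .
qed

end
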